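(* Assume $q\neq0$. For every integer $n$, $$h_{n-2}h_{n-1}h_{n+1}h_{n+2}-h_n^4=Ed^2q^{n-2}\left[\left(p^2+q\right)h_n^2+Ed^2p^2q^{n-1}\right].$$
   Context: Let $p,q,a,b$ be complex numbers with $q\neq0$, let $d^2=p^2-4q$ and $E=b^2-abp+a^2q$. The Horadam-Lucas sequence $(h_n)$ is defined by $h_0=2b-ap$, $h_1=bp-2aq$, $h_n=ph_{n-1}-qh_{n-2}$. It is extended to all integer indices by $h_{n-2}=(ph_{n-1}-h_n)/q$. *)

theory Defs
  imports Complex_Main
begin

fun hl_pos :: "complex \<Rightarrow> complex \<Rightarrow> complex \<Rightarrow> complex \<Rightarrow> nat \<Rightarrow> complex" where
  "hl_pos p q a b 0 = 2*b - a*p"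
| "hl_pos p q a b (Suc 0) = b*p - 2*a*q"
| "hl_pos p q a b (Suc (Suc n)) = p * hl_pos p q a b (Suc n) - q * hl_pos p q a b n"

text \<open>Backward extension: hl_neg k = h_(-k), via h_(n-2) = (p h_(n-1) - h_n)/q.\<close>
fun hl_neg :: "complex \<Rightarrow> complex \<Rightarrow> complex \<Rightarrow> complex \<Rightarrow> nat \<Rightarrow> complex" where
  "hl_neg p q a b 0 = 2*b - a*p"
| "hl_neg p q a b (Suc 0) = (p * (2*b - a*p) - (b*p - 2*a*q)) / q"
| "hl_neg p q a b (Suc (Suc n)) = (p * hl_neg p q a b (Suc n) - hl_neg p q a b n) / q"

definition hl :: "complex \<Rightarrow> complex \<Rightarrow> complex \<Rightarrow> complex \<Rightarrow> int \<Rightarrow> complex" where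
  "hl p q a b n = (if 0 \<le> n then hl_pos p q a b (nat n) else hl_neg p q a b (nat (- n)))"

end

theory Submission
  imports Defs
begin

text \<open>For any sequence with \<open>f (n+2) = p f (n+1) - q f n\<close> the quadratic form
  \<open>f (n+1)\<^sup>2 - p f n f (n+1) + q f n\<^sup>2\<close> gets multiplied by \<open>q\<close> at each step, so it equals
  \<open>q\<^sup>n\<close> times its value at \<open>0\<close>, which is \<open>-E d\<^sup>2\<close> for the Horadam-Lucas sequence.
  Writing \<open>h (n-1)\<close>, \<open>h (n-2)\<close>, \<open>h (n+2)\<close> through \<open>h n\<close> and \<open>h (n+1)\<close>, the left-hand
  side becomes a polynomial in this form and \<open>h n\<close>.\<close>

definition cassini_form :: "'a::comm_ring_1 \<Rightarrow> 'a \<Rightarrow> (int \<Rightarrow> 'a) \<Rightarrow> int \<Rightarrow> 'a" where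
  "cassini_form p q f n = f (n+1)^2 - p * f n * f (n+1) + q * f n^2"

lemma cassini_form_Suc:
  assumes rec: "\<And>n. f (n+2) = p * f (n+1) - q * f n"
  shows "cassini_form p q f (n+1) = q * cassini_form p q f n"
  unfolding cassini_form_def add.assoc one_add_one rec by (simp add: algebra_simps power2_eq_square)

lemma cassini_form_eq_powi:
  fixes f :: "int \<Rightarrow> 'a::field"
  assumes q: "q \<noteq> 0" and rec: "\<And>n. f (n+2) = p * f (n+1) - q * f n"
  shows "cassini_form p q f n = q powi n * cassini_form p q f 0"
proof (induction n rule: int_induct[where k=0])
  case base
  show ?case by simp
next
  case (step1 i)
  then show ?case
    using q by (simp add: cassini_form_Suc[OF rec] power_int_add)
next
  case (step2 i)
  have "q * cassini_form p q f (i-1) = q * (q powi (i-1) * cassini_form p q f 0)"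
    using step2 q cassini_form_Suc[OF rec, of "i-1"] by (simp add: power_int_diff)
  then show ?case using q by simp
qed

lemma recurrence_product_identity:
  fixes f :: "int \<Rightarrow> 'a::field" and n :: int
  assumes q: "q \<noteq> 0" and rec: "\<And>n. f (n+2) = p * f (n+1) - q * f n"
  defines "C \<equiv> cassini_form p q f n"
  shows "f (n-2) * f (n-1) * f (n+1) * f (n+2) - f n ^ 4
         = C^2 * p^2 / q^3 - C * (p^2 + q) * f n^2 / q^2"
proof -
  define x y where "x = f n" and "y = f (n+1)"
  have prev: "f (n-1) = (p * x - y) / q"
    using rec[of "n-1"] q unfolding x_def y_def by (simp add: field_simps add.commute)
  have prev2: "f (n-2) = (p * f (n-1) - x) / q"
    using rec[of "n-2"] q unfolding x_def by (simp add: field_simps add.commute)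
  have succ: "f (n+2) = p * y - q * x"
    using rec[of n] unfolding x_def y_def .
  have "((p * ((p*x - y)/q) - x)/q) * ((p*x - y)/q) * y * (p*y - q*x) - x^4
        = (y^2 - p*x*y + q*x^2)^2 * p^2 / q^3 - (y^2 - p*x*y + q*x^2) * (p^2 + q) * x^2 / q^2"
    using q by (simp add: field_simps power2_eq_square power3_eq_cube)
      (simp add: algebra_simps eval_nat_numeral)
  then show ?thesis
    unfolding C_def cassini_form_def x_def[symmetric] y_def[symmetric] prev2 prev succ .
qed

lemma hl_recurrence:
  assumes q: "q \<noteq> 0"
  shows "hl p q a b (n+2) = p * hl p q a b (n+1) - q * hl p q a b n"
proof (cases "n \<ge> 0")
  case True
  then have "nat (n+2) = Suc (Suc (nat n))" "nat (n+1) = Suc (nat n)" by auto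
  then show ?thesis using True by (simp add: hl_def)
next
  case False
  show ?thesis
  proof (cases "n = -1")
    case True
    then show ?thesis using q by (simp add: hl_def field_simps)
  next
    case False
    define k where "k = nat (- n - 2)"
    have k: "n = - int k - 2" using False \<open>\<not> n \<ge> 0\<close> unfolding k_def by auto
    have "hl p q a b n = hl_neg p q a b (Suc (Suc k))"
         "hl p q a b (n+1) = hl_neg p q a b (Suc k)"
         "hl p q a b (n+2) = hl_neg p q a b k"
      using k by (simp_all add: hl_def nat_add_distrib)
    then show ?thesis using q by (simp add: field_simps)
  qed
qed

lemma hl_cassini_form:
  assumes "q \<noteq> 0"
  shows "cassini_form p q (hl p q a b) n
         = - ((b^2 - a*b*p + a^2*q) * (p^2 - 4*q)) * q powi n"
proof -
  have "cassini_form p q (hl p q a b) 0 = - ((b^2 - a*b*p + a^2*q) * (p^2 - 4*q))"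
    by (simp add: cassini_form_def hl_def power2_eq_square algebra_simps)
  then show ?thesis
    unfolding cassini_form_eq_powi[OF assms hl_recurrence[OF assms], where n=n] by simp
qed

theorem mainTheorem10:
  fixes p q a b :: complex and n :: int
  assumes "q \<noteq> 0"
  defines "h \<equiv> hl p q a b"
      and "d2 \<equiv> p^2 - 4*q"
      and "E \<equiv> b^2 - a*b*p + a^2*q"
  shows "h (n-2) * h (n-1) * h (n+1) * h (n+2) - h n ^ 4
         = E * d2 * q powi (n-2) * ((p^2 + q) * (h n)^2 + E * d2 * p^2 * q powi (n-1))"
proof -
  have C: "cassini_form p q h n = - (E * d2) * q powi n"
    using hl_cassini_form[OF assms(1)] unfolding h_def E_def d2_def .
  have "h (n-2) * h (n-1) * h (n+1) * h (n+2) - h n ^ 4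
        = (E * d2 * q powi n)^2 * p^2 / q^3 + E * d2 * q powi n * (p^2 + q) * h n^2 / q^2"
    using recurrence_product_identity[where n=n,
        OF assms(1) hl_recurrence[OF assms(1), where p=p and a=a and b=b]]
    unfolding h_def[symmetric] C by (simp add: power2_eq_square)
  also have "\<dots> = E * d2 * q powi (n-2) * ((p^2 + q) * (h n)^2 + E * d2 * p^2 * q powi (n-1))"
    using assms(1) by (simp add: power_int_diff field_simps power2_eq_square power3_eq_cube)
  finally show ?thesis .
qed

end
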